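(* Let $P_Z$ be a distribution on a sample space $\mathcal{Z}$, let $S=(Z_1,\ldots,Z_n)$ consist of $n$ i.i.d. samples from $P_Z$, and let a hypothesis $W\in\mathcal{W}$ be produced by a conditional distribution (learning algorithm) $P_{W|S}$. Let $\ell:\mathcal{W}\times\mathcal{Z}\to\mathbb{R}$ be a loss function. Suppose that $(\mathcal{W},\rho)$ is a Polish metric space and that for every $z\in\mathcal{Z}$ the map $w\mapsto \ell(w,z)$ is $L$-Lipschitz under $\rho$. Then $$\big|\overline{\mathrm{gen}}(W,S)\big| \le \frac{L}{n}\sum_{i=1}^n \mathbb{E}\big[\mathbb{W}(P_{W|Z_i},P_W)\big].$$
   Context: The population risk is $\mathscr{L}_{P_Z}(w)=\mathbb{E}[\ell(w,Z)]$ with $Z\sim P_Z$; the empirical risk is $\mathscr{L}_s(w)=\frac1n\sum_{i=1}^n\ell(w,z_i)$; the generalization error is $\mathrm{gen}(w,s)=\mathscr{L}_{P_Z}(w)-\mathscr{L}_s(w)$ and $\overline{\mathrm{gen}}(W,S)=\mathbb{E}[\mathrm{gen}(W,S)]$ (expectation over the joint distribution of $(W,S)$). $P_W$ is the marginal distribution of $W$ and $P_{W|Z_i}$ the conditional distribution of $W$ given $Z_i$; the expectation in the bound is over $Z_i\sim P_Z$. A function $f$ is $L$-Lipschitz under $\rho$ if $|f(x)-f(y)|\le L\rho(x,y)$ for all $x,y$. $\mathbb{W}(P,Q)=\inf_{R\in\Pi(P,Q)}\int\rho(x,y)\,dR(x,y)$ is the Wasserstein distance of order 1 with respect to $\rho$,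 where $\Pi(P,Q)$ is the set of couplings of $P$ and $Q$. Polish spaces carry the Borel $\sigma$-algebra generated by $\rho$. *)

theory Defs
  imports "HOL-Probability.Probability"
begin

definition couplings :: "'w::metric_space measure \<Rightarrow> 'w measure \<Rightarrow> ('w \<times> 'w) measure set" where
  "couplings P Q = {R. sets R = sets (borel \<Otimes>\<^sub>M borel) \<and>
      distr R borel fst = P \<and> distr R borel snd = Q}"

definition wasserstein1 :: "'w::metric_space measure \<Rightarrow> 'w measure \<Rightarrow> ennreal" where
  "wasserstein1 P Q = (INF R \<in> couplings P Q. \<integral>\<^sup>+ xy. ennreal (dist (fst xy) (snd xy)) \<partial>R)"

text \<open>Joint distribution of (S, W): S drawn from Ms, W drawn from kernel K given S.\<close>
definition joint :: "'s measure \<Rightarrow> ('s \<Rightarrow> 'w measure) \<Rightarrow> 'w measure \<Rightarrow> ('s \<times> 'w) measure" where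
  "joint Ms K Mw = Ms \<bind> (\<lambda>s. distr (K s) (Ms \<Otimes>\<^sub>M Mw) (\<lambda>w. (s, w)))"

definition pop_risk :: "'z measure \<Rightarrow> ('w \<Rightarrow> 'z \<Rightarrow> real) \<Rightarrow> 'w \<Rightarrow> real" where
  "pop_risk PZ loss w = (\<integral> z. loss w z \<partial>PZ)"

definition emp_risk :: "nat \<Rightarrow> ('w \<Rightarrow> 'z \<Rightarrow> real) \<Rightarrow> 'w \<Rightarrow> (nat \<Rightarrow> 'z) \<Rightarrow> real" where
  "emp_risk n loss w s = (\<Sum>i<n. loss w (s i)) / real n"

definition gen :: "'z measure \<Rightarrow> nat \<Rightarrow> ('w \<Rightarrow> 'z \<Rightarrow> real) \<Rightarrow> 'w \<Rightarrow> (nat \<Rightarrow> 'z) \<Rightarrow> real" where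
  "gen PZ n loss w s = pop_risk PZ loss w - emp_risk n loss w s"

end

theory Submission
  imports Defs
begin

text \<open>
  For every \<open>i\<close>, the kernel \<open>Q i\<close> is the conditional law of \<open>W\<close> given \<open>Z\<^sub>i\<close>, so
  \<open>E[\<ell>(W, Z\<^sub>i)] = E\<^sub>z[\<integral> \<ell>(w, z) dQ\<^sub>i(z)]\<close>, while by Fubini \<open>E[L\<^sub>P(W)] = E\<^sub>z[\<integral> \<ell>(w, z) dP\<^sub>W]\<close>.
  Hence the expected generalization error is the average over \<open>i\<close> of
  \<open>E\<^sub>z[\<integral> \<ell>(w, z) dP\<^sub>W - \<integral> \<ell>(w, z) dQ\<^sub>i(z)]\<close>. For fixed \<open>z\<close>, integrating the Lipschitz bound
  \<open>\<bar>\<ell>(w, z) - \<ell>(w', z)\<bar> \<le> L \<rho>(w, w')\<close> against any coupling of \<open>Q\<^sub>i(z)\<close> and \<open>P\<^sub>W\<close> bounds the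
  inner difference by \<open>L\<close> times the transport cost, hence by \<open>L W\<^sub>1(Q\<^sub>i(z), P\<^sub>W)\<close>.
\<close>

lemma integral_bind_kernel_nonneg:
  fixes f :: "'b \<Rightarrow> real"
  assumes N[measurable]: "N \<in> M \<rightarrow>\<^sub>M subprob_algebra B" and M: "space M \<noteq> {}"
    and f[measurable]: "f \<in> borel_measurable B" and nonneg: "\<And>y. 0 \<le> f y"
    and int: "integrable (M \<bind> N) f"
  shows "AE x in M. integrable (N x) f"
    and "integrable M (\<lambda>x. \<integral> y. f y \<partial>N x)"
    and "(\<integral> y. f y \<partial>(M \<bind> N)) = (\<integral> x. \<integral> y. f y \<partial>N x \<partial>M)"
proof -
  have f_N[measurable]: "f \<in> borel_measurable (N x)" if "x \<in> space M" for x
    using sets_kernel[OF N that] by (simp cong: measurable_cong_sets)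
  have "(\<integral>\<^sup>+ x. \<integral>\<^sup>+ y. f y \<partial>N x \<partial>M) = (\<integral>\<^sup>+ y. f y \<partial>(M \<bind> N))"
    by (rule nn_integral_bind[symmetric, OF _ N]) simp
  also have "\<dots> = ennreal (\<integral> y. f y \<partial>(M \<bind> N))"
    using int nonneg by (intro nn_integral_eq_integral) auto
  finally have outer: "(\<integral>\<^sup>+ x. \<integral>\<^sup>+ y. f y \<partial>N x \<partial>M) = ennreal (\<integral> y. f y \<partial>(M \<bind> N))" .
  have "AE x in M. (\<integral>\<^sup>+ y. f y \<partial>N x) \<noteq> \<infinity>"
    using outer by (intro nn_integral_PInf_AE) auto
  with AE_space show AE_int: "AE x in M. integrable (N x) f"
    by eventually_elim (auto intro!: integrableI_nonneg f_N simp: nonneg top.not_eq_extremum)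
  have inner: "AE x in M. (\<integral>\<^sup>+ y. f y \<partial>N x) = ennreal (\<integral> y. f y \<partial>N x)"
    using AE_int by eventually_elim (simp add: nn_integral_eq_integral nonneg)
  have outer_real: "(\<integral>\<^sup>+ x. ennreal (\<integral> y. f y \<partial>N x) \<partial>M) = ennreal (\<integral> y. f y \<partial>(M \<bind> N))"
    using outer inner by (simp cong: nn_integral_cong_AE)
  have inner_nonneg: "0 \<le> (\<integral> y. f y \<partial>N x)" for x
    by (simp add: nonneg)
  show "integrable M (\<lambda>x. \<integral> y. f y \<partial>N x)"
    by (intro integrableI_nonneg) (auto simp: outer_real inner_nonneg)
  show "(\<integral> y. f y \<partial>(M \<bind> N)) = (\<integral> x. \<integral> y. f y \<partial>N x \<partial>M)"
    by (subst integral_eq_nn_integral) (auto simp: outer_real inner_nonneg nonneg)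
qed

text \<open>The library lemma \<open>integral_bind\<close> only covers bounded integrands.\<close>

lemma integral_bind_kernel:
  fixes f :: "'b \<Rightarrow> real"
  assumes N[measurable]: "N \<in> M \<rightarrow>\<^sub>M subprob_algebra B" and M: "space M \<noteq> {}"
    and f[measurable]: "f \<in> borel_measurable B" and int: "integrable (M \<bind> N) f"
  shows "integrable M (\<lambda>x. \<integral> y. f y \<partial>N x)"
    and "(\<integral> y. f y \<partial>(M \<bind> N)) = (\<integral> x. \<integral> y. f y \<partial>N x \<partial>M)"
proof -
  define g where "g y = \<bar>f y\<bar> + f y" for y
  have g[measurable]: "g \<in> borel_measurable B"
    unfolding g_def by measurable
  have g_nonneg: "0 \<le> g y" for y
    by (simp add: g_def)
  have int_g: "integrable (M \<bind> N) g"
    using int unfolding g_def by auto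
  note G = integral_bind_kernel_nonneg[OF N M g g_nonneg int_g]
  note A = integral_bind_kernel_nonneg[OF N M borel_measurable_abs[OF f] abs_ge_zero integrable_abs[OF int]]
  have inner: "AE x in M. (\<integral> y. f y \<partial>N x) = (\<integral> y. g y \<partial>N x) - (\<integral> y. \<bar>f y\<bar> \<partial>N x)"
    using G(1) A(1)
  proof eventually_elim
    case (elim x)
    have "(\<integral> y. g y - \<bar>f y\<bar> \<partial>N x) = (\<integral> y. g y \<partial>N x) - (\<integral> y. \<bar>f y\<bar> \<partial>N x)"
      using elim by (rule Bochner_Integration.integral_diff)
    then show ?case
      by (simp add: g_def)
  qed
  show "integrable M (\<lambda>x. \<integral> y. f y \<partial>N x)"
  proof (rule integrable_cong_AE_imp)
    show "integrable M (\<lambda>x. (\<integral> y. g y \<partial>N x) - (\<integral> y. \<bar>f y\<bar> \<partial>N x))"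
      using G(2) A(2) by (rule Bochner_Integration.integrable_diff)
    show "AE x in M. (\<integral> y. g y \<partial>N x) - (\<integral> y. \<bar>f y\<bar> \<partial>N x) = (\<integral> y. f y \<partial>N x)"
      using inner by eventually_elim simp
  qed measurable
  have "(\<integral> y. f y \<partial>(M \<bind> N)) = (\<integral> y. g y - \<bar>f y\<bar> \<partial>(M \<bind> N))"
    by (simp add: g_def)
  also have "\<dots> = (\<integral> y. g y \<partial>(M \<bind> N)) - (\<integral> y. \<bar>f y\<bar> \<partial>(M \<bind> N))"
    using int_g int by (intro Bochner_Integration.integral_diff) auto
  also have "\<dots> = (\<integral> x. \<integral> y. g y \<partial>N x \<partial>M) - (\<integral> x. \<integral> y. \<bar>f y\<bar> \<partial>N x \<partial>M)"
    by (simp only: G(3) A(3))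
  also have "\<dots> = (\<integral> x. (\<integral> y. g y \<partial>N x) - (\<integral> y. \<bar>f y\<bar> \<partial>N x) \<partial>M)"
    by (rule Bochner_Integration.integral_diff[symmetric, OF G(2) A(2)])
  also have "\<dots> = (\<integral> x. \<integral> y. f y \<partial>N x \<partial>M)"
    using inner by (intro integral_cong_AE) (measurable, auto)
  finally show "(\<integral> y. f y \<partial>(M \<bind> N)) = (\<integral> x. \<integral> y. f y \<partial>N x \<partial>M)" .
qed

lemma measurable_joint_kernel:
  assumes "K \<in> M \<rightarrow>\<^sub>M subprob_algebra N"
  shows "(\<lambda>x. distr (K x) (M \<Otimes>\<^sub>M N) (\<lambda>y. (x, y))) \<in> M \<rightarrow>\<^sub>M subprob_algebra (M \<Otimes>\<^sub>M N)"
  by (rule measurable_distr2[OF _ assms]) simp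

lemma sets_joint:
  assumes "K \<in> M \<rightarrow>\<^sub>M subprob_algebra N" and "space M \<noteq> {}"
  shows "sets (joint M K N) = sets (M \<Otimes>\<^sub>M N)"
  unfolding joint_def by (rule sets_bind_measurable[OF measurable_joint_kernel]) fact+

lemma emeasure_joint_Times:
  assumes K: "K \<in> M \<rightarrow>\<^sub>M subprob_algebra N" and M: "space M \<noteq> {}"
    and A: "A \<in> sets M" and B: "B \<in> sets N"
  shows "emeasure (joint M K N) (A \<times> B) = (\<integral>\<^sup>+ x. indicator A x * emeasure (K x) B \<partial>M)"
  unfolding joint_def
proof (subst emeasure_bind[OF M measurable_joint_kernel[OF K]])
  show "A \<times> B \<in> sets (M \<Otimes>\<^sub>M N)"
    using A B by simp
  show "(\<integral>\<^sup>+ x. emeasure (distr (K x) (M \<Otimes>\<^sub>M N) (\<lambda>y. (x, y))) (A \<times> B) \<partial>M)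
      = (\<integral>\<^sup>+ x. indicator A x * emeasure (K x) B \<partial>M)"
  proof (rule nn_integral_cong)
    fix x assume x: "x \<in> space M"
    have sets_K: "sets (K x) = sets N"
      using sets_kernel[OF K x] .
    have "emeasure (distr (K x) (M \<Otimes>\<^sub>M N) (\<lambda>y. (x, y))) (A \<times> B)
        = emeasure (K x) ((\<lambda>y. (x, y)) -` (A \<times> B) \<inter> space (K x))"
      using x A B by (intro emeasure_distr) (auto simp: measurable_cong_sets[OF sets_K refl])
    also have "\<dots> = indicator A x * emeasure (K x) B"
      using sets_eq_imp_space_eq[OF sets_K] sets.sets_into_space[OF B] by (auto simp: indicator_def Int_absorb2)
    finally show "emeasure (distr (K x) (M \<Otimes>\<^sub>M N) (\<lambda>y. (x, y))) (A \<times> B)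
        = indicator A x * emeasure (K x) B" .
  qed
qed

lemma distr_joint_snd:
  assumes K: "K \<in> M \<rightarrow>\<^sub>M subprob_algebra N" and M: "space M \<noteq> {}"
  shows "distr (joint M K N) N snd = M \<bind> K"
  unfolding joint_def
proof (subst distr_bind[OF measurable_joint_kernel[OF K] M measurable_snd], rule bind_cong[OF refl])
  fix x assume x: "x \<in> space M"
  have sets_K: "sets (K x) = sets N"
    using sets_kernel[OF K x] .
  have "distr (distr (K x) (M \<Otimes>\<^sub>M N) (\<lambda>y. (x, y))) N snd = distr (K x) N (snd \<circ> (\<lambda>y. (x, y)))"
    using x by (intro distr_distr) (auto simp: measurable_cong_sets[OF sets_K refl])
  also have "\<dots> = K x"
    using sets_K by (simp add: comp_def distr_id2)
  finally show "distr (distr (K x) (M \<Otimes>\<^sub>M N) (\<lambda>y. (x, y))) N snd = K x" .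
qed

lemma joint_eqI:
  assumes M: "prob_space M" and K: "K \<in> M \<rightarrow>\<^sub>M subprob_algebra N"
    and sets_eq: "sets \<nu> = sets (M \<Otimes>\<^sub>M N)"
    and Times: "\<And>A B. A \<in> sets M \<Longrightarrow> B \<in> sets N \<Longrightarrow>
      emeasure \<nu> (A \<times> B) = (\<integral>\<^sup>+ x. indicator A x * emeasure (K x) B \<partial>M)"
  shows "\<nu> = joint M K N"
proof -
  interpret prob_space M by (rule M)
  let ?E = "{A \<times> B | A B. A \<in> sets M \<and> B \<in> sets N}"
  have "emeasure \<nu> (space M \<times> space N) \<le> (\<integral>\<^sup>+ x. 1 \<partial>M)"
    unfolding Times[OF sets.top sets.top]
  proof (rule nn_integral_mono)
    fix x assume x: "x \<in> space M"
    interpret subprob_space "K x"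
      using subprob_space_kernel[OF K x] .
    show "indicator (space M) x * emeasure (K x) (space N) \<le> 1"
      using x emeasure_space_le_1 sets_eq_imp_space_eq[OF sets_kernel[OF K x]] by simp
  qed
  then have finite: "emeasure \<nu> (space M \<times> space N) \<noteq> \<infinity>"
    by (auto simp: top_unique)
  show ?thesis
  proof (rule measure_eqI_generator_eq_countable[OF Int_stable_pair_measure_generator pair_measure_closed])
    show "sets \<nu> = sigma_sets (space M \<times> space N) ?E" "sets (joint M K N) = sigma_sets (space M \<times> space N) ?E"
      using sets_eq sets_joint[OF K not_empty] by (simp_all add: sets_pair_measure)
    show "emeasure \<nu> X = emeasure (joint M K N) X" if "X \<in> ?E" for X
      using that by (auto simp: Times emeasure_joint_Times[OF K not_empty])
    show "{space M \<times> space N} \<subseteq> ?E" "\<Union> {space M \<times> space N} = space M \<times> space N"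
      by auto
  qed (use finite in auto)
qed

lemma integral_joint:
  fixes f :: "'a \<times> 'b \<Rightarrow> real"
  assumes K: "K \<in> M \<rightarrow>\<^sub>M subprob_algebra N" and M: "space M \<noteq> {}"
    and f[measurable]: "f \<in> borel_measurable (M \<Otimes>\<^sub>M N)" and int: "integrable (joint M K N) f"
  shows "integrable M (\<lambda>x. \<integral> y. f (x, y) \<partial>K x)"
    and "(\<integral> p. f p \<partial>joint M K N) = (\<integral> x. \<integral> y. f (x, y) \<partial>K x \<partial>M)"
proof -
  note bind = integral_bind_kernel[OF measurable_joint_kernel[OF K] M f int[unfolded joint_def]]
  have inner: "(\<integral> p. f p \<partial>distr (K x) (M \<Otimes>\<^sub>M N) (\<lambda>y. (x, y))) = (\<integral> y. f (x, y) \<partial>K x)"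
    if x: "x \<in> space M" for x
    using x by (intro integral_distr) (auto simp: measurable_cong_sets[OF sets_kernel[OF K x] refl])
  show "integrable M (\<lambda>x. \<integral> y. f (x, y) \<partial>K x)"
    using bind(1) Bochner_Integration.integrable_cong[OF refl inner, of M "\<lambda>x. x"] by simp
  show "(\<integral> p. f p \<partial>joint M K N) = (\<integral> x. \<integral> y. f (x, y) \<partial>K x \<partial>M)"
    using bind(2) Bochner_Integration.integral_cong[OF refl inner] unfolding joint_def by simp
qed

lemma Lipschitz_integral_diff_le_coupling_cost:
  fixes f :: "'w::metric_space \<Rightarrow> real"
  assumes R: "R \<in> couplings P Q"
    and f[measurable]: "f \<in> borel_measurable borel"
    and lip: "\<And>w w'. \<bar>f w - f w'\<bar> \<le> L * dist w w'"
    and int: "integrable Q f" and cost: "integrable R (\<lambda>p. dist (fst p) (snd p))"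
  shows "\<bar>(\<integral> w. f w \<partial>P) - (\<integral> w. f w \<partial>Q)\<bar> \<le> L * (\<integral> p. dist (fst p) (snd p) \<partial>R)"
proof -
  have sets_R: "sets R = sets (borel \<Otimes>\<^sub>M borel)" and P: "distr R borel fst = P"
    and Q: "distr R borel snd = Q"
    using R by (auto simp: couplings_def)
  have [measurable]: "fst \<in> R \<rightarrow>\<^sub>M borel" "snd \<in> R \<rightarrow>\<^sub>M borel"
    by (simp_all add: measurable_cong_sets[OF sets_R refl])
  have int_snd: "integrable R (\<lambda>p. f (snd p))"
    using int integrable_distr_eq[of snd R borel f] Q by simp
  have int_diff: "integrable R (\<lambda>p. f (fst p) - f (snd p))"
  proof (rule Bochner_Integration.integrable_bound)
    show "integrable R (\<lambda>p. L * dist (fst p) (snd p))"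
      using cost by simp
    show "AE p in R. norm (f (fst p) - f (snd p)) \<le> norm (L * dist (fst p) (snd p))"
      by (intro AE_I2) (simp add: order_trans[OF lip abs_ge_self])
  qed measurable
  have int_fst: "integrable R (\<lambda>p. f (fst p))"
    using Bochner_Integration.integrable_add[OF int_diff int_snd] by simp
  have "(\<integral> w. f w \<partial>P) - (\<integral> w. f w \<partial>Q) = (\<integral> p. f (fst p) - f (snd p) \<partial>R)"
    using int_fst int_snd by (simp add: P[symmetric] Q[symmetric] integral_distr)
  also have "\<bar>\<dots>\<bar> \<le> (\<integral> p. \<bar>f (fst p) - f (snd p)\<bar> \<partial>R)"
    by (rule integral_abs_bound)
  also have "\<dots> \<le> (\<integral> p. L * dist (fst p) (snd p) \<partial>R)"
    using int_diff cost lip by (intro integral_mono) auto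
  finally show ?thesis
    by simp
qed

lemma Lipschitz_integral_diff_le_wasserstein1:
  fixes f :: "'w::{metric_space, second_countable_topology} \<Rightarrow> real"
  assumes P: "prob_space P" and Q: "prob_space Q"
    and f: "f \<in> borel_measurable borel"
    and lip: "\<And>w w'. \<bar>f w - f w'\<bar> \<le> L * dist w w'"
    and int: "integrable Q f"
  shows "ennreal \<bar>(\<integral> w. f w \<partial>P) - (\<integral> w. f w \<partial>Q)\<bar> \<le> ennreal L * wasserstein1 P Q"
proof (cases "L > 0")
  case False
  then have const_eq: "f w = f w'" for w w'
    using lip[of w w'] by (smt (verit) mult_nonpos_nonneg zero_le_dist)
  have "(\<integral> w. f w \<partial>M) = f undefined" if "prob_space M" for M
  proof -
    have "(\<integral> w. f w \<partial>M) = (\<integral> w. f undefined \<partial>M)"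
      by (rule Bochner_Integration.integral_cong[OF refl const_eq])
    then show ?thesis
      by (simp add: prob_space.prob_space[OF that])
  qed
  then show ?thesis
    using P Q by simp
next
  case True
  let ?\<Delta> = "\<bar>(\<integral> w. f w \<partial>P) - (\<integral> w. f w \<partial>Q)\<bar>"
  have "ennreal (?\<Delta> / L) \<le> wasserstein1 P Q"
    unfolding wasserstein1_def
  proof (rule INF_greatest)
    fix R assume R: "R \<in> couplings P Q"
    show "ennreal (?\<Delta> / L) \<le> (\<integral>\<^sup>+ p. ennreal (dist (fst p) (snd p)) \<partial>R)"
    proof (cases "(\<integral>\<^sup>+ p. ennreal (dist (fst p) (snd p)) \<partial>R) = \<infinity>")
      case False
      have sets_R: "sets R = sets (borel \<Otimes>\<^sub>M borel)"
        using R by (simp add: couplings_def)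
      have [measurable]: "fst \<in> R \<rightarrow>\<^sub>M borel" "snd \<in> R \<rightarrow>\<^sub>M borel"
        by (simp_all add: measurable_cong_sets[OF sets_R refl])
      \<comment> \<open>Measurability of the cost on \<open>borel \<Otimes>\<^sub>M borel\<close> needs second countability.\<close>
      have cost: "integrable R (\<lambda>p. dist (fst p) (snd p))"
        by (rule integrableI_nonneg) (use False in \<open>auto simp: top.not_eq_extremum\<close>)
      have "?\<Delta> / L \<le> (\<integral> p. dist (fst p) (snd p) \<partial>R)"
        using Lipschitz_integral_diff_le_coupling_cost[OF R f lip int cost] True
        by (simp add: divide_le_eq mult.commute)
      then show ?thesis
        using cost by (simp add: nn_integral_eq_integral ennreal_leI)
    qed simp
  qed
  then have "ennreal L * ennreal (?\<Delta> / L) \<le> ennreal L * wasserstein1 P Q"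
    by (rule mult_left_mono) simp
  then show ?thesis
    using True by (simp add: ennreal_mult[symmetric])
qed

text \<open>
  No measurability of \<open>h\<close> is assumed (\<open>\<lambda>z. wasserstein1 (Q z) P\<close> is not known to be
  measurable), which is why \<open>L\<close> stays outside the integral.
\<close>

lemma ennreal_abs_integral_le_cmult_nn_integral:
  fixes g :: "'a \<Rightarrow> real" and h :: "'a \<Rightarrow> ennreal"
  assumes g: "integrable M g" and bound: "AE x in M. ennreal \<bar>g x\<bar> \<le> ennreal L * h x"
  shows "ennreal \<bar>\<integral> x. g x \<partial>M\<bar> \<le> ennreal L * (\<integral>\<^sup>+ x. h x \<partial>M)"
proof (cases "L > 0")
  case False
  then have "ennreal L = 0"
    by (simp add: ennreal_eq_0_iff)
  with bound have "AE x in M. g x = 0"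
    by simp
  then show ?thesis
    by (simp add: integral_eq_zero_AE)
next
  case True
  have "AE x in M. ennreal (\<bar>g x\<bar> / L) \<le> h x"
    using bound
  proof eventually_elim
    case (elim x)
    then have "ennreal L * ennreal (\<bar>g x\<bar> / L) \<le> ennreal L * h x"
      using True by (simp add: ennreal_mult'[symmetric])
    then show ?case
      using True by (simp add: ennreal_mult_le_mult_iff)
  qed
  then have "(\<integral>\<^sup>+ x. ennreal (\<bar>g x\<bar> / L) \<partial>M) \<le> (\<integral>\<^sup>+ x. h x \<partial>M)"
    by (rule nn_integral_mono_AE)
  moreover have "ennreal (\<bar>\<integral> x. g x \<partial>M\<bar> / L) \<le> (\<integral>\<^sup>+ x. ennreal (\<bar>g x\<bar> / L) \<partial>M)"
  proof -
    have "\<bar>\<integral> x. g x \<partial>M\<bar> / L \<le> (\<integral> x. \<bar>g x\<bar> / L \<partial>M)"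
      using True by (simp add: divide_right_mono integral_abs_bound)
    also have "ennreal \<dots> = (\<integral>\<^sup>+ x. ennreal (\<bar>g x\<bar> / L) \<partial>M)"
      using g True by (intro nn_integral_eq_integral[symmetric]) auto
    finally show ?thesis
      by (simp add: ennreal_leI)
  qed
  ultimately have "ennreal L * ennreal (\<bar>\<integral> x. g x \<partial>M\<bar> / L) \<le> ennreal L * (\<integral>\<^sup>+ x. h x \<partial>M)"
    by (intro mult_left_mono) auto
  then show ?thesis
    using True by (simp add: ennreal_mult'[symmetric])
qed

lemma ennreal_abs_mean_le:
  fixes g :: "'i \<Rightarrow> real" and X :: "'i \<Rightarrow> ennreal" and c :: real
  assumes c: "c > 0" and bound: "\<And>i. i \<in> I \<Longrightarrow> ennreal \<bar>g i\<bar> \<le> ennreal L * X i"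
  shows "ennreal \<bar>(\<Sum>i\<in>I. g i) / c\<bar> \<le> ennreal (L / c) * (\<Sum>i\<in>I. X i)"
proof -
  have "\<bar>(\<Sum>i\<in>I. g i) / c\<bar> \<le> (1 / c) * (\<Sum>i\<in>I. \<bar>g i\<bar>)"
    using c by (simp add: divide_right_mono sum_abs)
  then have "ennreal \<bar>(\<Sum>i\<in>I. g i) / c\<bar> \<le> ennreal (1 / c) * (\<Sum>i\<in>I. ennreal \<bar>g i\<bar>)"
    using c by (simp add: ennreal_mult'[symmetric] ennreal_leI)
  also have "\<dots> \<le> ennreal (1 / c) * (\<Sum>i\<in>I. ennreal L * X i)"
    using bound by (intro mult_left_mono sum_mono) auto
  also have "\<dots> = ennreal (L / c) * (\<Sum>i\<in>I. X i)"
  proof -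
    have "ennreal (L / c) = ennreal (1 / c) * ennreal L"
      using c by (simp add: ennreal_mult'[symmetric])
    then show ?thesis
      by (simp add: sum_distrib_left mult.assoc)
  qed
  finally show ?thesis .
qed

lemma integral_by_conditional_kernel:
  fixes h :: "'z \<Rightarrow> 'w \<Rightarrow> real"
  assumes PZ: "prob_space PZ" and Q: "Q \<in> PZ \<rightarrow>\<^sub>M prob_algebra N"
    and X[measurable]: "X \<in> J \<rightarrow>\<^sub>M PZ" and Y[measurable]: "Y \<in> J \<rightarrow>\<^sub>M N"
    and cond: "\<And>A B. A \<in> sets PZ \<Longrightarrow> B \<in> sets N \<Longrightarrow>
      (\<integral>\<^sup>+ z. indicator A z * emeasure (Q z) B \<partial>PZ) = emeasure J ({p. X p \<in> A \<and> Y p \<in> B} \<inter> space J)"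
    and h[measurable]: "case_prod h \<in> borel_measurable (PZ \<Otimes>\<^sub>M N)"
    and int: "integrable J (\<lambda>p. h (X p) (Y p))"
  shows "integrable PZ (\<lambda>z. \<integral> w. h z w \<partial>Q z)"
    and "(\<integral> p. h (X p) (Y p) \<partial>J) = (\<integral> z. \<integral> w. h z w \<partial>Q z \<partial>PZ)"
proof -
  have Q_sub: "Q \<in> PZ \<rightarrow>\<^sub>M subprob_algebra N"
    using Q by (rule measurable_prob_algebraD)
  have nonempty: "space PZ \<noteq> {}"
    using PZ by (rule prob_space.not_empty)
  have XY[measurable]: "(\<lambda>p. (X p, Y p)) \<in> J \<rightarrow>\<^sub>M PZ \<Otimes>\<^sub>M N"
    by measurable
  have joint_eq: "distr J (PZ \<Otimes>\<^sub>M N) (\<lambda>p. (X p, Y p)) = joint PZ Q N"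
  proof (rule joint_eqI[OF PZ Q_sub])
    fix A B assume A: "A \<in> sets PZ" and B: "B \<in> sets N"
    have "(\<lambda>p. (X p, Y p)) -` (A \<times> B) \<inter> space J = {p. X p \<in> A \<and> Y p \<in> B} \<inter> space J"
      by auto
    then show "emeasure (distr J (PZ \<Otimes>\<^sub>M N) (\<lambda>p. (X p, Y p))) (A \<times> B)
        = (\<integral>\<^sup>+ z. indicator A z * emeasure (Q z) B \<partial>PZ)"
      using A B by (simp add: emeasure_distr cond)
  qed simp
  have int_joint: "integrable (joint PZ Q N) (case_prod h)"
    using int by (simp add: joint_eq[symmetric] integrable_distr_eq)
  note by_joint = integral_joint[OF Q_sub nonempty h int_joint]
  show "integrable PZ (\<lambda>z. \<integral> w. h z w \<partial>Q z)"
    using by_joint(1) by simp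
  show "(\<integral> p. h (X p) (Y p) \<partial>J) = (\<integral> z. \<integral> w. h z w \<partial>Q z \<partial>PZ)"
    using by_joint(2) by (simp add: joint_eq[symmetric] integral_distr)
qed

lemma integral_gen_eq_mean_gap:
  assumes n: "n > 0" and pop: "integrable J (\<lambda>p. pop_risk PZ loss (snd p))"
    and emp: "\<And>i. i < n \<Longrightarrow> integrable J (\<lambda>p. loss (snd p) (fst p i))"
  shows "(\<integral> p. gen PZ n loss (snd p) (fst p) \<partial>J)
    = (\<Sum>i<n. (\<integral> p. pop_risk PZ loss (snd p) \<partial>J) - (\<integral> p. loss (snd p) (fst p i) \<partial>J)) / real n"
proof -
  have "(\<integral> p. gen PZ n loss (snd p) (fst p) \<partial>J)
      = (\<integral> p. pop_risk PZ loss (snd p) - (\<Sum>i<n. loss (snd p) (fst p i)) / real n \<partial>J)"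
    by (simp add: gen_def emp_risk_def)
  also have "\<dots> = (\<integral> p. pop_risk PZ loss (snd p) \<partial>J) - (\<Sum>i<n. \<integral> p. loss (snd p) (fst p i) \<partial>J) / real n"
  proof -
    have "integrable J (\<lambda>p. (\<Sum>i<n. loss (snd p) (fst p i)) / real n)"
      using emp by (intro integrable_divide_zero integrable_sum) auto
    then show ?thesis
      using pop emp by (simp add: integral_sum)
  qed
  also have "\<dots> = (\<Sum>i<n. (\<integral> p. pop_risk PZ loss (snd p) \<partial>J) - (\<integral> p. loss (snd p) (fst p i) \<partial>J)) / real n"
    using n by (simp add: sum_subtractf field_simps)
  finally show ?thesis .
qed

lemma integral_pop_risk_snd:
  fixes loss :: "'w \<Rightarrow> 'z \<Rightarrow> real"
  assumes PW: "prob_space PW" and PZ: "prob_space PZ"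
    and snd_J: "snd \<in> J \<rightarrow>\<^sub>M N" and J_snd: "distr J N snd = PW"
    and int: "integrable (PW \<Otimes>\<^sub>M PZ) (\<lambda>p. loss (fst p) (snd p))"
  shows "integrable J (\<lambda>p. pop_risk PZ loss (snd p))"
    and "(\<integral> p. pop_risk PZ loss (snd p) \<partial>J) = (\<integral> z. \<integral> w. loss w z \<partial>PW \<partial>PZ)"
proof -
  interpret PW: prob_space PW by (rule PW)
  interpret PZ: prob_space PZ by (rule PZ)
  interpret PWZ: pair_sigma_finite PW PZ ..
  have int': "integrable (PW \<Otimes>\<^sub>M PZ) (case_prod loss)"
    using int by (simp add: case_prod_beta')
  have pop_int: "integrable PW (pop_risk PZ loss)"
    using PWZ.integrable_fst[OF int'] by (simp add: pop_risk_def[abs_def])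
  have "sets PW = sets N"
    by (simp add: J_snd[symmetric])
  note pop_measurable = borel_measurable_integrable[OF pop_int, unfolded measurable_cong_sets[OF this refl]]
  show "integrable J (\<lambda>p. pop_risk PZ loss (snd p))"
    using pop_int by (simp add: J_snd[symmetric] integrable_distr_eq[OF snd_J pop_measurable])
  have "(\<integral> p. pop_risk PZ loss (snd p) \<partial>J) = (\<integral> w. pop_risk PZ loss w \<partial>PW)"
    using integral_distr[OF snd_J pop_measurable] J_snd by simp
  also have "\<dots> = (\<integral> z. \<integral> w. loss w z \<partial>PW \<partial>PZ)"
    using PWZ.Fubini_integral[OF int'] by (simp add: pop_risk_def)
  finally show "(\<integral> p. pop_risk PZ loss (snd p) \<partial>J) = (\<integral> z. \<integral> w. loss w z \<partial>PW \<partial>PZ)" .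
qed

lemma Lipschitz_expected_gap_le_wasserstein1:
  fixes loss :: "'w::{metric_space, second_countable_topology} \<Rightarrow> 'z \<Rightarrow> real"
  assumes PW: "prob_space PW" and PZ: "prob_space PZ" and Q: "Q \<in> PZ \<rightarrow>\<^sub>M prob_algebra borel"
    and loss_meas: "(\<lambda>p. loss (fst p) (snd p)) \<in> borel_measurable (borel \<Otimes>\<^sub>M PZ)"
    and lipschitz: "\<And>z w w'. z \<in> space PZ \<Longrightarrow> \<bar>loss w z - loss w' z\<bar> \<le> L * dist w w'"
    and int_PW: "integrable (PW \<Otimes>\<^sub>M PZ) (\<lambda>p. loss (fst p) (snd p))"
    and int_Q: "integrable PZ (\<lambda>z. \<integral> w. loss w z \<partial>Q z)"
  shows "ennreal \<bar>(\<integral> z. \<integral> w. loss w z \<partial>PW \<partial>PZ) - (\<integral> z. \<integral> w. loss w z \<partial>Q z \<partial>PZ)\<bar>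
    \<le> ennreal L * (\<integral>\<^sup>+ z. wasserstein1 (Q z) PW \<partial>PZ)"
proof -
  interpret PWZ: pair_sigma_finite PW PZ
    by (intro pair_sigma_finite.intro prob_space_imp_sigma_finite PW PZ)
  have "integrable (PW \<Otimes>\<^sub>M PZ) (case_prod loss)"
    using int_PW by (simp add: case_prod_beta')
  note int_inner = PWZ.integrable_snd[OF this] PWZ.AE_integrable_snd[OF this]
  have int_gap: "integrable PZ (\<lambda>z. (\<integral> w. loss w z \<partial>PW) - (\<integral> w. loss w z \<partial>Q z))"
    using int_inner(1) int_Q by simp
  have "AE z in PZ. ennreal \<bar>(\<integral> w. loss w z \<partial>PW) - (\<integral> w. loss w z \<partial>Q z)\<bar>
      \<le> ennreal L * wasserstein1 (Q z) PW"
    using int_inner(2) AE_space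
  proof eventually_elim
    case (elim z)
    have Q_z: "prob_space (Q z)"
      using measurable_space[OF Q elim(2)] by (simp add: space_prob_algebra)
    have loss_z: "(\<lambda>w. loss w z) \<in> borel_measurable borel"
      using measurable_compose[OF measurable_Pair2'[OF elim(2)] loss_meas] by simp
    show ?case
      using Lipschitz_integral_diff_le_wasserstein1[OF Q_z PW loss_z lipschitz[OF elim(2)] elim(1)]
      by (simp add: abs_minus_commute)
  qed
  from ennreal_abs_integral_le_cmult_nn_integral[OF int_gap this] show ?thesis
    using int_inner(1) int_Q by simp
qed

theorem theorem1:
  fixes PZ :: "'z measure"
    and n :: nat
    and K :: "(nat \<Rightarrow> 'z) \<Rightarrow> 'w::polish_space measure"
    and Q :: "nat \<Rightarrow> 'z \<Rightarrow> 'w measure"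
    and loss :: "'w \<Rightarrow> 'z \<Rightarrow> real"
    and L :: real
  defines "S \<equiv> PiM {..<n} (\<lambda>_. PZ)"
  defines "J \<equiv> joint S K borel"
  defines "PW \<equiv> S \<bind> K"
  assumes PZ: "prob_space PZ"
    and n: "n > 0"
    and K: "K \<in> S \<rightarrow>\<^sub>M prob_algebra borel"
    and Q_kernel: "\<And>i. i < n \<Longrightarrow> Q i \<in> PZ \<rightarrow>\<^sub>M prob_algebra borel"
    and Q_cond: "\<And>i A B. i < n \<Longrightarrow> A \<in> sets PZ \<Longrightarrow> B \<in> sets borel \<Longrightarrow>
        (\<integral>\<^sup>+ z. indicator A z * emeasure (Q i z) B \<partial>PZ)
          = emeasure J ({p. fst p i \<in> A \<and> snd p \<in> B} \<inter> space J)"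
    and loss_meas: "(\<lambda>p. loss (fst p) (snd p)) \<in> borel_measurable (borel \<Otimes>\<^sub>M PZ)"
    and loss_int_joint: "\<And>i. i < n \<Longrightarrow> integrable J (\<lambda>p. loss (snd p) (fst p i))"
    and loss_int_indep: "integrable (PW \<Otimes>\<^sub>M PZ) (\<lambda>p. loss (fst p) (snd p))"
    and lipschitz: "\<And>z w w'. z \<in> space PZ \<Longrightarrow> \<bar>loss w z - loss w' z\<bar> \<le> L * dist w w'"
  shows "ennreal \<bar>\<integral> p. gen PZ n loss (snd p) (fst p) \<partial>J\<bar>
           \<le> ennreal (L / real n) * (\<Sum>i<n. \<integral>\<^sup>+ z. wasserstein1 (Q i z) PW \<partial>PZ)"
proof -
  interpret S: prob_space S
    unfolding S_def by (intro prob_space_PiM PZ)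
  have K_sub: "K \<in> S \<rightarrow>\<^sub>M subprob_algebra borel"
    using K by (rule measurable_prob_algebraD)
  have PW: "prob_space PW"
    unfolding PW_def by (rule prob_space_bind'[OF _ K]) (simp add: space_prob_algebra S.prob_space_axioms)
  have sets_J: "sets J = sets (S \<Otimes>\<^sub>M borel)"
    unfolding J_def using K_sub S.not_empty by (rule sets_joint)
  have snd_J: "snd \<in> J \<rightarrow>\<^sub>M borel"
    by (simp add: measurable_cong_sets[OF sets_J refl])
  have J_snd: "distr J borel snd = PW"
    unfolding J_def PW_def using K_sub S.not_empty by (rule distr_joint_snd)
  note pop = integral_pop_risk_snd[OF PW PZ snd_J J_snd loss_int_indep]
  have loss_swap: "(\<lambda>(z, w). loss w z) \<in> borel_measurable (PZ \<Otimes>\<^sub>M borel)"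
    using measurable_compose[OF measurable_pair_swap' loss_meas] by (simp add: case_prod_beta')
  have sample: "integrable PZ (\<lambda>z. \<integral> w. loss w z \<partial>Q i z)"
      "(\<integral> p. loss (snd p) (fst p i) \<partial>J) = (\<integral> z. \<integral> w. loss w z \<partial>Q i z \<partial>PZ)" if i: "i < n" for i
  proof -
    have sample_J: "(\<lambda>p. fst p i) \<in> J \<rightarrow>\<^sub>M PZ"
      unfolding measurable_cong_sets[OF sets_J refl] S_def by measurable (simp add: i)
    show "integrable PZ (\<lambda>z. \<integral> w. loss w z \<partial>Q i z)"
      "(\<integral> p. loss (snd p) (fst p i) \<partial>J) = (\<integral> z. \<integral> w. loss w z \<partial>Q i z \<partial>PZ)"
      using integral_by_conditional_kernel[OF PZ Q_kernel[OF i] sample_J snd_J _ loss_swap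
          loss_int_joint[OF i]] Q_cond[OF i] by blast+
  qed
  have gap_bound: "ennreal \<bar>(\<integral> p. pop_risk PZ loss (snd p) \<partial>J) - (\<integral> p. loss (snd p) (fst p i) \<partial>J)\<bar>
      \<le> ennreal L * (\<integral>\<^sup>+ z. wasserstein1 (Q i z) PW \<partial>PZ)" if i: "i < n" for i
    using Lipschitz_expected_gap_le_wasserstein1[OF PW PZ Q_kernel[OF i] loss_meas lipschitz
        loss_int_indep sample(1)[OF i]]
    by (simp add: pop(2) sample(2)[OF i])
  have "ennreal \<bar>(\<Sum>i<n. (\<integral> p. pop_risk PZ loss (snd p) \<partial>J) - (\<integral> p. loss (snd p) (fst p i) \<partial>J)) / real n\<bar>
      \<le> ennreal (L / real n) * (\<Sum>i<n. \<integral>\<^sup>+ z. wasserstein1 (Q i z) PW \<partial>PZ)"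
    using n gap_bound by (intro ennreal_abs_mean_le) auto
  then show ?thesis
    by (simp only: integral_gen_eq_mean_gap[OF n pop(1) loss_int_joint])
qed

end
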